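(* Let $X\subseteq\{0,1\}^n$ be a nonempty set, let $U\subseteq\mathbb{R}^{n+1}$ be a nonempty compact set, define $f(x):=\max_{(c_0,c)\in U}\, c^\top x+c_0$ for $x\in\mathbb{R}^n$, and let $P:=\operatorname{conv}(X)$. Then Algorithm SD (described in the context) terminates after a finite number of iterations, and the point $x^k$ it outputs is a minimizer of $f$ over $P$.
   Context: For a convex function $f$, $\partial f(x)$ denotes its subdifferential at $x$. For a convex set $C$ and $x\in C$, $\mathcal{N}_C(x)=\{d\in\mathbb{R}^n: d^\top(y-x)\le 0\ \forall y\in C\}$ is the normal cone of $C$ at $x$. Algorithm SD: pick any $\hat x^0\in X$ and set $V^1=\{\hat x^0\}$. For $k=1,2,\dots$: compute (by any method) $\alpha^k\in\mathbb{R}^{V^k}_+$ with $\sum_{v\in V^k}\alpha^k_v=1$, the point $x^k=\sum_{v\in V^k}\alpha^k_v v$, and a vector $c^k\in\partial f(x^k)\cap(-\mathcal{N}_{\operatorname{conv}(V^k)}(x^k))$; then compute a minimizer $\hat x^k$ of $\min_{x\in X}(c^k)^\top x$. If $(c^k)^\top\hat x^k\ge (c^k)^\top x^k$, stop and output $x^k$; otherwise set $V^{k+1}:=V^k\cup\{\hat x^k\}$ and continue. *)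

theory Defs
  imports "HOL-Analysis.Analysis"
begin

definition subdifferential :: "('a::real_inner \<Rightarrow> real) \<Rightarrow> 'a \<Rightarrow> 'a set" where
  "subdifferential f x = {g. \<forall>y. f y \<ge> f x + g \<bullet> (y - x)}"

definition normal_cone :: "'a::real_inner set \<Rightarrow> 'a \<Rightarrow> 'a set" where
  "normal_cone C x = {d. \<forall>y\<in>C. d \<bullet> (y - x) \<le> 0}"

definition SD_iter :: "('a::real_inner \<Rightarrow> real) \<Rightarrow> 'a set \<Rightarrow> 'a set \<Rightarrow> ('a \<Rightarrow> real)
    \<Rightarrow> 'a \<Rightarrow> 'a \<Rightarrow> 'a \<Rightarrow> bool" where
  "SD_iter f X V \<alpha> x c xh \<longleftrightarrow>
     (\<forall>v\<in>V. \<alpha> v \<ge> 0) \<and> (\<Sum>v\<in>V. \<alpha> v) = 1 \<and> x = (\<Sum>v\<in>V. \<alpha> v *\<^sub>R v) \<and>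
     c \<in> subdifferential f x \<and> - c \<in> normal_cone (convex hull V) x \<and>
     xh \<in> X \<and> (\<forall>y\<in>X. c \<bullet> xh \<le> c \<bullet> y)"

definition SD_stop :: "'a::real_inner \<Rightarrow> 'a \<Rightarrow> 'a \<Rightarrow> bool" where
  "SD_stop x c xh \<longleftrightarrow> c \<bullet> xh \<ge> c \<bullet> x"

end

theory Submission
  imports Defs
begin

(* Each non-final iteration adds a vertex xh^k not yet in V^k: c^k is minus a normal of conv(V^k)
   at x^k, so c^k is minimised over V^k at x^k, whereas c^k xh^k < c^k x^k.  Since every V^k lies
   in the finite set X, this can happen only |X| times.  At the final iteration c^k is a
   subgradient of f at x^k that is minimised over X, hence over conv X, at x^k; so x^k minimises f
   over conv X.  Convexity of f and the special shape of f, X and U only serve to guarantee that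
   the algorithm is well defined. *)

lemma finite_vec_range:
  assumes "finite A"
  shows "finite {v :: 'a ^ 'n. \<forall>i. v $ i \<in> A}"
proof -
  have "{v :: 'a ^ 'n. \<forall>i. v $ i \<in> A} \<subseteq> vec_lambda ` PiE UNIV (\<lambda>_. A)"
  proof
    fix v :: "'a ^ 'n"
    assume "v \<in> {v. \<forall>i. v $ i \<in> A}"
    then have "(\<lambda>i. v $ i) \<in> PiE UNIV (\<lambda>_. A)" by auto
    then show "v \<in> vec_lambda ` PiE UNIV (\<lambda>_. A)" by (metis image_eqI vec_lambda_eta)
  qed
  moreover have "finite (PiE (UNIV :: 'n set) (\<lambda>_. A))"
    using assms by (intro finite_PiE) auto
  ultimately show ?thesis by (rule finite_subset[OF _ finite_imageI])
qed

lemma finite_binary_vectors: "finite {v :: real ^ 'n. \<forall>i. v $ i = 0 \<or> v $ i = 1}"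
  using finite_vec_range[of "{0 :: real, 1}"] by simp

lemma notin_if_normal_cone_descent:
  assumes "- c \<in> normal_cone (convex hull V) x" and "c \<bullet> y < c \<bullet> x"
  shows "y \<notin> V"
proof
  assume "y \<in> V"
  then have "y \<in> convex hull V"
    by (rule hull_inc)
  with assms(1) have "(- c) \<bullet> (y - x) \<le> 0"
    unfolding normal_cone_def by blast
  with assms(2) show False by (simp add: inner_diff_right)
qed

lemma subgradient_minimizer_convex_hull:
  assumes "c \<in> subdifferential f x" and "\<forall>y\<in>X. c \<bullet> x \<le> c \<bullet> y" and "z \<in> convex hull X"
  shows "f x \<le> f z"
proof -
  have "convex hull X \<subseteq> {y. c \<bullet> x \<le> c \<bullet> y}"
    using assms(2) convex_halfspace_ge[of "c \<bullet> x" c] by (intro hull_minimal) auto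
  then have "0 \<le> c \<bullet> (z - x)"
    using assms(3) by (auto simp: inner_diff_right)
  moreover have "f x + c \<bullet> (z - x) \<le> f z"
    using assms(1) unfolding subdifferential_def by blast
  ultimately show ?thesis by linarith
qed

lemma SD_iter_point_in_convex_hull:
  assumes "SD_iter f X V \<alpha> x c xh" and "finite V"
  shows "x \<in> convex hull V"
  using assms unfolding SD_iter_def by (auto simp: convex_hull_finite)

locale SD_run =
  fixes f :: "'a::real_inner \<Rightarrow> real" and X :: "'a set"
    and V :: "nat \<Rightarrow> 'a set" and \<alpha> :: "nat \<Rightarrow> 'a \<Rightarrow> real"
    and x c xh :: "nat \<Rightarrow> 'a"
  assumes init: "xh 0 \<in> X" "V 1 = {xh 0}"
    and run: "\<And>k. k \<ge> 1 \<Longrightarrow> (\<forall>j\<in>{1..<k}. \<not> SD_stop (x j) (c j) (xh j)) \<Longrightarrow>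
               SD_iter f X (V k) (\<alpha> k) (x k) (c k) (xh k) \<and>
               (\<not> SD_stop (x k) (c k) (xh k) \<longrightarrow> V (Suc k) = insert (xh k) (V k))"
begin

abbreviation stops :: "nat \<Rightarrow> bool" where
  "stops j \<equiv> SD_stop (x j) (c j) (xh j)"

lemma vertices_grow:
  assumes "k \<ge> 1" and "\<forall>j\<in>{1..<k}. \<not> stops j"
  shows "finite (V k) \<and> V k \<subseteq> X \<and> card (V k) = k"
  using assms
proof (induction k rule: nat_induct_at_least)
  case base
  then show ?case using init by simp
next
  case (Suc k)
  have before: "\<forall>j\<in>{1..<k}. \<not> stops j" and not_stop: "\<not> stops k"
    using Suc.prems Suc.hyps by auto
  have it: "SD_iter f X (V k) (\<alpha> k) (x k) (c k) (xh k)"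
    and V_Suc: "V (Suc k) = insert (xh k) (V k)"
    using run[OF Suc.hyps before] not_stop by auto
  have "- c k \<in> normal_cone (convex hull V k) (x k)"
    using it unfolding SD_iter_def by blast
  moreover have "c k \<bullet> xh k < c k \<bullet> x k"
    using not_stop by (simp add: SD_stop_def)
  ultimately have "xh k \<notin> V k"
    by (rule notin_if_normal_cone_descent)
  moreover have "xh k \<in> X"
    using it unfolding SD_iter_def by blast
  ultimately show ?case
    using Suc.IH[OF before] V_Suc by simp
qed

lemma first_stop_exists:
  assumes "finite X"
  shows "\<exists>k\<ge>1. (\<forall>j\<in>{1..<k}. \<not> stops j) \<and> stops k"
proof -
  have "\<exists>j\<ge>1. stops j"
  proof (rule ccontr)
    assume "\<not> (\<exists>j\<ge>1. stops j)"
    then have "V (card X + 1) \<subseteq> X" and "card (V (card X + 1)) = card X + 1"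
      using vertices_grow[of "card X + 1"] by auto
    moreover have "card (V (card X + 1)) \<le> card X"
      using card_mono[OF assms] calculation(1) .
    ultimately show False by simp
  qed
  define k where "k = (LEAST j. j \<ge> 1 \<and> stops j)"
  have "k \<ge> 1 \<and> stops k"
    unfolding k_def using \<open>\<exists>j\<ge>1. stops j\<close> by (rule LeastI_ex)
  moreover have "\<not> stops j" if "j \<in> {1..<k}" for j
    using not_less_Least[of j "\<lambda>j. j \<ge> 1 \<and> stops j"] that unfolding k_def by auto
  ultimately show ?thesis by blast
qed

lemma first_stop_optimal:
  assumes "k \<ge> 1" and "\<forall>j\<in>{1..<k}. \<not> stops j" and "stops k"
  shows "x k \<in> convex hull X \<and> (\<forall>y\<in>convex hull X. f (x k) \<le> f y)"
proof -
  have it: "SD_iter f X (V k) (\<alpha> k) (x k) (c k) (xh k)"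
    using run assms(1,2) by blast
  have V_sub: "finite (V k)" "V k \<subseteq> X"
    using vertices_grow[OF assms(1,2)] by auto
  have "x k \<in> convex hull V k"
    using it V_sub(1) by (rule SD_iter_point_in_convex_hull)
  moreover have "convex hull V k \<subseteq> convex hull X"
    using V_sub(2) by (rule hull_mono)
  ultimately have "x k \<in> convex hull X" by blast
  have "c k \<bullet> x k \<le> c k \<bullet> xh k"
    using assms(3) by (simp add: SD_stop_def)
  moreover have "\<forall>y\<in>X. c k \<bullet> xh k \<le> c k \<bullet> y"
    using it unfolding SD_iter_def by blast
  ultimately have "\<forall>y\<in>X. c k \<bullet> x k \<le> c k \<bullet> y"
    by (meson order_trans)
  moreover have "c k \<in> subdifferential f (x k)"
    using it unfolding SD_iter_def by blast
  ultimately show ?thesis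
    using \<open>x k \<in> convex hull X\<close> subgradient_minimizer_convex_hull by blast
qed

end

theorem theorem1:
  fixes X :: "(real ^ 'n) set" and U :: "(real \<times> (real ^ 'n)) set"
    and f :: "real ^ 'n \<Rightarrow> real"
    and V :: "nat \<Rightarrow> (real ^ 'n) set" and \<alpha> :: "nat \<Rightarrow> real ^ 'n \<Rightarrow> real"
    and x c xh :: "nat \<Rightarrow> real ^ 'n"
  assumes X01: "\<forall>v\<in>X. \<forall>i. v $ i = 0 \<or> v $ i = 1"
    and Xne: "X \<noteq> {}"
    and Ucomp: "compact U" and Une: "U \<noteq> {}"
    and f_def: "f = (\<lambda>y. SUP (c0, cc)\<in>U. cc \<bullet> y + c0)"
    and init: "xh 0 \<in> X" "V 1 = {xh 0}"
    and run: "\<And>k. k \<ge> 1 \<Longrightarrow> (\<forall>j\<in>{1..<k}. \<not> SD_stop (x j) (c j) (xh j)) \<Longrightarrow>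
               SD_iter f X (V k) (\<alpha> k) (x k) (c k) (xh k) \<and>
               (\<not> SD_stop (x k) (c k) (xh k) \<longrightarrow> V (Suc k) = insert (xh k) (V k))"
  shows "\<exists>k\<ge>1. (\<forall>j\<in>{1..<k}. \<not> SD_stop (x j) (c j) (xh j)) \<and> SD_stop (x k) (c k) (xh k) \<and>
           x k \<in> convex hull X \<and> (\<forall>y\<in>convex hull X. f (x k) \<le> f y)"
proof -
  interpret SD_run f X V \<alpha> x c xh
    by standard (fact init run)+
  have "finite X"
    using X01 finite_subset[OF _ finite_binary_vectors] by blast
  then obtain k where "k \<ge> 1" "\<forall>j\<in>{1..<k}. \<not> stops j" "stops k"
    using first_stop_exists by blast
  then show ?thesis
    using first_stop_optimal by blast
qed

end
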